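(* Let $p<1$. For any $t\in[0,T]$ and $n\in\mathbb N$, with $\mathcal O^n_t=\{x\in\mathbb{R}^d:x^Tz\ge-1+\frac1n\ \forall z\in\mathbf S_t\}$, the map $(y,M,\mu)\mapsto\sup_{x\in\mathcal O^n_t}g^{(y,M,\mu)}(x)$ is continuous on $\Theta_t$ with respect to the metric $d_{\mathcal C}$.
   Context: Fix $T>0$, $d\ge1$, $\varepsilon\in(0,2]$. Let $\mathbb{S}^d_+$ be the symmetric positive definite $d\times d$ matrices, $\mathcal L$ the Lévy measures on $\mathbb{R}^d$, with $d^\varepsilon_{\mathcal L}(\mu,\nu)=\sup\int f\,d(\tilde\mu-\tilde\nu)$, $\tilde\mu(A)=\int_A(|z|^{2-\varepsilon}\wedge1)\mu(dz)$, sup over bounded continuous $f$ with $\sup_{z\neq\hat z}[|f(z)|\vee|f(z)-f(\hat z)|/|z-\hat z|^{\varepsilon\wedge1}]\le1$. $\mathcal C\subset\mathbb{R}^d\times\mathbb{S}^d_+\times\mathcal L$ is compact for $d_{\mathcal C}((y,M,\mu),(\hat y,\hat M,\hat\mu))=|y-\hat y|\vee\|M-\hat M\|_2\vee d^\varepsilon_{\mathcal L}(\mu,\hat\mu)$; $\Theta:[0,T]\twoheadrightarrow\mathcal C$ is a weakly measurable correspondence with closed convex values. Assume $\mathbf S_t=\bigcup_{(y,M,\mu)\in\Theta_t}\mathrm{supp}(\mu)$ is closed, there is $\kappa_t>0$ with $\{|z|\le\kappa_t^{-1}\}\subseteq\mathrm{Conv}(\mathbf S_t\cup\{0\})\subseteq\{|z|\le\kappa_t\}$,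 and $|y|\vee\|M\|_2\vee d^\varepsilon_{\mathcal L}(\mu,0)\le\kappa_t$ on $\Theta_t$. Let $U(x)=\log x$ if $p=0$, $x^p/p$ otherwise, and for $x$ with $x^Tz>-1$ for all $z\in\mathbf S_t$ and $(y,M,\mu)\in\Theta_t$ let $g^{(y,M,\mu)}(x)=x^Ty-\frac{1-p}2x^TMx+\int(U(1+x^Tz)-U(1)-x^Tz)\mu(dz)$. *)

theory Defs
  imports "HOL-Analysis.Analysis"
begin

type_synonym 'd triple = "(real^'d) \<times> (real^'d^'d) \<times> (real^'d) measure"

definition spd :: "real^('d::finite)^'d \<Rightarrow> bool" where
  "spd M \<longleftrightarrow> transpose M = M \<and> (\<forall>x. x \<noteq> 0 \<longrightarrow> x \<bullet> (M *v x) > 0)"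

definition mnorm2 :: "real^('d::finite)^'d \<Rightarrow> real" where
  "mnorm2 M = onorm (\<lambda>x. M *v x)"

definition levy :: "(real^('d::finite)) measure \<Rightarrow> bool" where
  "levy \<mu> \<longleftrightarrow> sets \<mu> = sets borel \<and> emeasure \<mu> {0} = 0 \<and>
     (\<integral>\<^sup>+ z. ennreal (min ((norm z)\<^sup>2) 1) \<partial>\<mu>) < \<infinity>"

text \<open>Weight |z|^(2-eps) min 1 defining the finite measure mu-tilde.\<close>
definition wt :: "real \<Rightarrow> real^('d::finite) \<Rightarrow> real" where
  "wt eps z = min (norm z powr (2 - eps)) 1"

definition testf :: "real \<Rightarrow> (real^('d::finite) \<Rightarrow> real) set" where
  "testf eps = {f. continuous_on UNIV f \<and> bounded (range f) \<and>
     (\<forall>z zh. z \<noteq> zh \<longrightarrow> \<bar>f z\<bar> \<le> 1 \<and> \<bar>f z - f zh\<bar> \<le> norm (z - zh) powr (min eps 1))}"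

text \<open>The (extended) metric d^eps_L; it is infinite when one of the tilde-measures
  is not finite (then the supremum is infinite anyway, taking f = 1).\<close>
definition dL :: "real \<Rightarrow> (real^('d::finite)) measure \<Rightarrow> (real^'d) measure \<Rightarrow> ereal" where
  "dL eps \<mu> \<nu> =
     (if \<mu> = \<nu> then 0
      else if integrable \<mu> (wt eps) \<and> integrable \<nu> (wt eps)
      then (SUP f \<in> testf eps. ereal ((\<integral>z. f z * wt eps z \<partial>\<mu>) - (\<integral>z. f z * wt eps z \<partial>\<nu>)))
      else \<infinity>)"

definition dC :: "real \<Rightarrow> ('d::finite) triple \<Rightarrow> ('d::finite) triple \<Rightarrow> ereal" where
  "dC eps a b = (case a of (y, M, \<mu>) \<Rightarrow> case b of (yh, Mh, \<mu>h) \<Rightarrow>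
     max (max (ereal (norm (y - yh))) (ereal (mnorm2 (M - Mh)))) (dL eps \<mu> \<mu>h))"

definition dC_compact :: "real \<Rightarrow> ('d::finite) triple set \<Rightarrow> bool" where
  "dC_compact eps C \<longleftrightarrow> (\<forall>s::nat \<Rightarrow> _. range s \<subseteq> C \<longrightarrow>
     (\<exists>l\<in>C. \<exists>r. strict_mono r \<and> ((\<lambda>k::nat. dC eps (s (r k)) l) \<longlongrightarrow> 0) sequentially))"

definition dC_closed_in :: "real \<Rightarrow> ('d::finite) triple set \<Rightarrow> ('d::finite) triple set \<Rightarrow> bool" where
  "dC_closed_in eps C A \<longleftrightarrow> A \<subseteq> C \<and> (\<forall>(s::nat \<Rightarrow> _) l. range s \<subseteq> A \<longrightarrow> l \<in> C \<longrightarrow>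
     ((\<lambda>k::nat. dC eps (s k) l) \<longlongrightarrow> 0) sequentially \<longrightarrow> l \<in> A)"

definition dC_open_in :: "real \<Rightarrow> ('d::finite) triple set \<Rightarrow> ('d::finite) triple set \<Rightarrow> bool" where
  "dC_open_in eps C U \<longleftrightarrow> U \<subseteq> C \<and>
     (\<forall>a\<in>U. \<exists>r>0. \<forall>b\<in>C. dC eps a b < ereal r \<longrightarrow> b \<in> U)"

definition mix_measure :: "real \<Rightarrow> (real^('d::finite)) measure \<Rightarrow> (real^'d) measure \<Rightarrow> (real^'d) measure" where
  "mix_measure l \<mu> \<nu> = measure_of UNIV (sets borel)
     (\<lambda>A. ennreal l * emeasure \<mu> A + ennreal (1 - l) * emeasure \<nu> A)"

definition triple_convex :: "('d::finite) triple set \<Rightarrow> bool" where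
  "triple_convex A \<longleftrightarrow> (\<forall>a\<in>A. \<forall>b\<in>A. \<forall>l\<in>{0..1::real}.
     (case a of (y, M, \<mu>) \<Rightarrow> case b of (yh, Mh, \<mu>h) \<Rightarrow>
       (l *\<^sub>R y + (1 - l) *\<^sub>R yh, l *\<^sub>R M + (1 - l) *\<^sub>R Mh, mix_measure l \<mu> \<mu>h)) \<in> A)"

definition weakly_measurable :: "real \<Rightarrow> real \<Rightarrow> ('d::finite) triple set \<Rightarrow> (real \<Rightarrow> ('d::finite) triple set) \<Rightarrow> bool" where
  "weakly_measurable eps T C \<Theta> \<longleftrightarrow>
     (\<forall>U. dC_open_in eps C U \<longrightarrow> {t \<in> {0..T}. \<Theta> t \<inter> U \<noteq> {}} \<in> sets borel)"

definition msupp :: "(real^('d::finite)) measure \<Rightarrow> (real^'d) set" where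
  "msupp \<mu> = {z. \<forall>e>0. emeasure \<mu> (ball z e) > 0}"

definition bigS :: "(real \<Rightarrow> ('d::finite) triple set) \<Rightarrow> real \<Rightarrow> (real^'d) set" where
  "bigS \<Theta> t = (\<Union>(y, M, \<mu>) \<in> \<Theta> t. msupp \<mu>)"

definition util :: "real \<Rightarrow> real \<Rightarrow> real" where
  "util p x = (if p = 0 then ln x else x powr p / p)"

definition gfun :: "real \<Rightarrow> ('d::finite) triple \<Rightarrow> real^'d \<Rightarrow> real" where
  "gfun p a x = (case a of (y, M, \<mu>) \<Rightarrow>
     x \<bullet> y - (1 - p) / 2 * (x \<bullet> (M *v x))
     + (\<integral>z. util p (1 + x \<bullet> z) - util p 1 - x \<bullet> z \<partial>\<mu>))"

definition Oset :: "(real \<Rightarrow> ('d::finite) triple set) \<Rightarrow> real \<Rightarrow> nat \<Rightarrow> (real^'d) set" where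
  "Oset \<Theta> t n = {x. \<forall>z \<in> bigS \<Theta> t. x \<bullet> z \<ge> -1 + 1 / real n}"

end

theory Submission
  imports Defs
begin

text \<open>Points \<open>x\<close> of \<open>O^n_t\<close> satisfy \<open>x \<bullet> z \<ge> -1 + 1/n\<close> on \<open>S_t\<close>; since the ball of radius
  \<open>1/\<kappa>_t\<close> lies in the convex hull of \<open>S_t \<union> {0}\<close>, this forces \<open>norm x \<le> \<kappa>_t\<close>, and the jump
  integrand \<open>U(1 + x \<bullet> z) - U(1) - x \<bullet> z\<close> is then bounded by a constant times \<open>(x \<bullet> z)\<^sup>2\<close>.
  The drift and diffusion terms of \<open>g\<close> are Lipschitz in \<open>(y, M)\<close>, uniformly in \<open>x\<close>.
  For the jump term, clip \<open>x \<bullet> z\<close> and cut \<open>norm z\<close> off below at a small \<open>c\<close>: the integrand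
  becomes \<open>\<psi> z * wt eps z\<close> with \<open>\<psi>\<close> bounded and Lipschitz uniformly in \<open>x\<close>, up to an
  error \<open>O(c powr eps) * wt eps z\<close> coming from \<open>norm z < c\<close>, and a fixed multiple of \<open>\<psi>\<close> is a test
  function of \<open>dL\<close>.  So \<open>g\<close> moves, uniformly on \<open>O^n_t\<close>, by at most
  \<open>L_c * dC + O(c powr eps)\<close>, and so does its supremum.\<close>

lemma lipschitz_on_interval_of_deriv_bound:
  fixes f f' :: "real \<Rightarrow> real"
  assumes der: "\<And>u. u \<in> {a..b} \<Longrightarrow> (f has_real_derivative f' u) (at u)"
    and bound: "\<And>u. u \<in> {a..b} \<Longrightarrow> \<bar>f' u\<bar> \<le> L" and "0 \<le> L"
  shows "L-lipschitz_on {a..b} f"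
proof (rule lipschitz_on_leI)
  fix u v assume uv: "u \<in> {a..b}" "v \<in> {a..b}" "u \<le> v"
  show "dist (f u) (f v) \<le> L * dist u v"
  proof (cases "u = v")
    case False
    with uv obtain \<xi> where \<xi>: "u < \<xi>" "\<xi> < v" "f v - f u = (v - u) * f' \<xi>"
      using MVT2[of u v f f'] der by (metis atLeastAtMost_iff less_eq_real_def order_trans)
    then have "\<bar>f v - f u\<bar> = \<bar>v - u\<bar> * \<bar>f' \<xi>\<bar>" by (simp add: abs_mult)
    also have "\<dots> \<le> \<bar>v - u\<bar> * L" using bound[of \<xi>] \<xi> uv by (intro mult_left_mono) auto
    finally show ?thesis by (simp add: dist_real_def abs_minus_commute mult.commute)
  qed (simp add: \<open>0 \<le> L\<close>)
qed fact

lemma powr_lipschitz_on: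
  assumes "0 < a"
  shows "(\<bar>q\<bar> * max (a powr (q - 1)) (b powr (q - 1)))-lipschitz_on {a..b} (\<lambda>u. u powr q)"
proof (rule lipschitz_on_interval_of_deriv_bound)
  fix u assume u: "u \<in> {a..b}"
  then show "((\<lambda>u. u powr q) has_real_derivative q * u powr (q - 1)) (at u)"
    using \<open>0 < a\<close> by (intro has_real_derivative_powr) auto
  have "u powr (q - 1) \<le> max (a powr (q - 1)) (b powr (q - 1))"
  proof (cases "q - 1 \<ge> 0")
    case True
    then have "u powr (q - 1) \<le> b powr (q - 1)" using u \<open>0 < a\<close> by (intro powr_mono2) auto
    then show ?thesis by linarith
  next
    case False
    then have "u powr (q - 1) \<le> a powr (q - 1)" using u \<open>0 < a\<close> by (intro powr_mono2') auto
    then show ?thesis by linarith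
  qed
  then show "\<bar>q * u powr (q - 1)\<bar> \<le> \<bar>q\<bar> * max (a powr (q - 1)) (b powr (q - 1))"
    by (simp add: abs_mult mult_left_mono)
qed (simp add: le_max_iff_disj)

lemma lipschitz_on_max_min: "1-lipschitz_on U (\<lambda>s::real. max a (min s b))"
  by (rule lipschitz_onI) (auto simp: dist_real_def)

lemma lipschitz_on_inner_left: "(norm x)-lipschitz_on U (\<lambda>z. x \<bullet> z)"
proof (rule lipschitz_onI)
  fix z w
  have "\<bar>x \<bullet> z - x \<bullet> w\<bar> \<le> norm x * norm (z - w)"
    using Cauchy_Schwarz_ineq2[of x "z - w"] by (simp add: inner_diff_right)
  then show "dist (x \<bullet> z) (x \<bullet> w) \<le> norm x * dist z w" by (simp add: dist_real_def dist_norm)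
qed simp

lemma lipschitz_on_divide:
  fixes N D :: "'a::metric_space \<Rightarrow> real"
  assumes N: "K-lipschitz_on UNIV N" "\<And>z. \<bar>N z\<bar> \<le> B"
    and D: "L-lipschitz_on UNIV D" "\<And>z. d \<le> D z" and "0 < d"
  shows "(K / d + B * L / d\<^sup>2)-lipschitz_on UNIV (\<lambda>z. N z / D z)"
proof (rule lipschitz_onI)
  have "0 \<le> K" "0 \<le> L" "0 \<le> B"
    using N D lipschitz_on_nonneg abs_ge_zero order_trans by blast+
  then show "0 \<le> K / d + B * L / d\<^sup>2" using \<open>0 < d\<close> by simp
  fix z w
  have Dzw: "d \<le> D z" "d \<le> D w" "d\<^sup>2 \<le> D z * D w"
    using D(2)[of z] D(2)[of w] \<open>0 < d\<close> by (auto simp: power2_eq_square intro: mult_mono)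
  have decomp: "N z / D z - N w / D w = (N z - N w) / D z + N w * (D w - D z) / (D z * D w)"
    using Dzw \<open>0 < d\<close> by (simp add: field_simps)
  have "\<bar>(N z - N w) / D z\<bar> \<le> K * dist z w / d"
    using lipschitz_onD[OF N(1), of z w] Dzw \<open>0 < d\<close> \<open>0 \<le> K\<close>
    by (simp add: dist_real_def frac_le)
  moreover have "\<bar>N w * (D w - D z) / (D z * D w)\<bar> \<le> B * (L * dist z w) / d\<^sup>2"
  proof -
    have "\<bar>N w * (D w - D z)\<bar> \<le> B * (L * dist z w)"
      using N(2)[of w] lipschitz_onD[OF D(1), of z w] \<open>0 \<le> B\<close>
      by (simp add: abs_mult dist_real_def abs_minus_commute mult_mono)
    then show ?thesis using Dzw \<open>0 < d\<close> \<open>0 \<le> B\<close> \<open>0 \<le> L\<close>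
      by (simp add: frac_le)
  qed
  ultimately have "\<bar>N z / D z - N w / D w\<bar> \<le> K * dist z w / d + B * (L * dist z w) / d\<^sup>2"
    unfolding decomp by (rule order_trans[OF abs_triangle_ineq add_mono])
  then show "dist (N z / D z) (N w / D w) \<le> (K / d + B * L / d\<^sup>2) * dist z w"
    by (simp add: dist_real_def field_simps)
qed

lemma abs_cSUP_diff_le:
  fixes f g :: "'a \<Rightarrow> real"
  assumes "X \<noteq> {}" "bdd_above (f ` X)" "bdd_above (g ` X)"
    and "\<And>x. x \<in> X \<Longrightarrow> \<bar>f x - g x\<bar> \<le> c"
  shows "\<bar>Sup (f ` X) - Sup (g ` X)\<bar> \<le> c"
proof -
  have "f x \<le> Sup (g ` X) + c" "g x \<le> Sup (f ` X) + c" if "x \<in> X" for x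
    using cSUP_upper[OF that assms(3)] cSUP_upper[OF that assms(2)] assms(4)[OF that] by linarith+
  then have "Sup (f ` X) \<le> Sup (g ` X) + c" "Sup (g ` X) \<le> Sup (f ` X) + c"
    by (simp_all add: cSUP_least[OF assms(1)])
  then show ?thesis by linarith
qed

lemma norm_le_of_inner_ge_on_hull:
  fixes x :: "'a::real_inner"
  assumes hull: "cball 0 (1 / k) \<subseteq> convex hull (S \<union> {0})" and "0 < k" "m \<le> 1"
    and inner: "\<forall>z\<in>S. -1 + m \<le> x \<bullet> z"
  shows "norm x \<le> (1 - m) * k"
proof (cases "x = 0")
  case False
  define w where "w = - (1 / (k * norm x)) *\<^sub>R x"
  have "convex hull (S \<union> {0}) \<subseteq> {v. -1 + m \<le> x \<bullet> v}"
    using inner \<open>m \<le> 1\<close> by (intro hull_minimal) (auto simp: convex_halfspace_ge)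
  moreover have "w \<in> cball 0 (1 / k)"
    using False \<open>0 < k\<close> by (simp add: w_def)
  ultimately have "-1 + m \<le> x \<bullet> w" using hull by auto
  also have "x \<bullet> w = - norm x / k"
    using False \<open>0 < k\<close> by (simp add: w_def dot_square_norm power2_eq_square)
  finally show ?thesis using \<open>0 < k\<close> by (simp add: field_simps)
qed (use assms in simp)

lemma mnorm2_nonneg: "0 \<le> mnorm2 M"
  unfolding mnorm2_def by (rule onorm_pos_le[OF matrix_vector_mul_bounded_linear])

lemma abs_inner_matrix_le: "\<bar>x \<bullet> (M *v x)\<bar> \<le> mnorm2 M * (norm x)\<^sup>2"
proof -
  have "\<bar>x \<bullet> (M *v x)\<bar> \<le> norm x * norm (M *v x)" by (rule Cauchy_Schwarz_ineq2)
  also have "\<dots> \<le> norm x * (mnorm2 M * norm x)"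
    unfolding mnorm2_def by (intro mult_left_mono onorm[OF matrix_vector_mul_bounded_linear]) auto
  finally show ?thesis by (simp add: power2_eq_square mult_ac)
qed

lemma exists_powr_small:
  assumes "0 < eps" "0 < e" "0 \<le> A"
  obtains c :: real where "0 < c" "c \<le> 1" "A * c powr eps < e"
proof
  define q where "q = e / (A + 1)"
  have "0 < q" using assms by (simp add: q_def)
  show "0 < min 1 (q powr (1 / eps))" "min 1 (q powr (1 / eps)) \<le> 1"
    using \<open>0 < q\<close> by auto
  have "min 1 (q powr (1 / eps)) powr eps \<le> (q powr (1 / eps)) powr eps"
    using assms \<open>0 < q\<close> by (intro powr_mono2) auto
  also have "\<dots> = q" using assms \<open>0 < q\<close> by (simp add: powr_powr)
  finally have "A * min 1 (q powr (1 / eps)) powr eps \<le> A * q"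
    using assms by (intro mult_left_mono) auto
  also have "A * q < e" using assms by (simp add: q_def field_simps)
  finally show "A * min 1 (q powr (1 / eps)) powr eps < e" .
qed

section \<open>The jump integrand and the weight\<close>

definition jump_integrand :: "real \<Rightarrow> real \<Rightarrow> real" where
  "jump_integrand p s = util p (1 + s) - util p 1 - s"

lemma gfun_eq:
  "gfun p (y, M, \<mu>) x = x \<bullet> y - (1 - p) / 2 * (x \<bullet> (M *v x)) + (\<integral>z. jump_integrand p (x \<bullet> z) \<partial>\<mu>)"
  by (simp add: gfun_def jump_integrand_def)

lemma util_has_real_derivative: "0 < u \<Longrightarrow> (util p has_real_derivative u powr (p - 1)) (at u)"
proof (cases "p = 0")
  case True
  moreover assume "0 < u"
  ultimately show ?thesis
    using DERIV_ln[of u] by (simp add: util_def[abs_def] powr_minus)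
next
  case False
  moreover assume "0 < u"
  ultimately show ?thesis
    using DERIV_cdivide[OF has_real_derivative_powr[of u p], of p] by (simp add: util_def[abs_def])
qed

lemma jump_integrand_has_real_derivative:
  "-1 < s \<Longrightarrow> (jump_integrand p has_real_derivative (1 + s) powr (p - 1) - 1) (at s)"
  unfolding jump_integrand_def[abs_def]
  by (rule derivative_eq_intros DERIV_chain2[OF util_has_real_derivative] | simp)+

lemma jump_integrand_lipschitz_on:
  assumes "p < 1" "0 < m" "m \<le> 1" "0 \<le> r"
  shows "((1 - p) * m powr (p - 2) * r)-lipschitz_on {max (-1 + m) (-r)..r} (jump_integrand p)"
proof (rule lipschitz_on_interval_of_deriv_bound)
  fix u assume u: "u \<in> {max (-1 + m) (-r)..r}"
  then show "(jump_integrand p has_real_derivative (1 + u) powr (p - 1) - 1) (at u)"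
    using assms by (intro jump_integrand_has_real_derivative) auto
  have "((1 - p) * m powr (p - 2))-lipschitz_on {m..max (1 + u) 1} (\<lambda>v. v powr (p - 1))"
  proof (rule lipschitz_on_le[OF powr_lipschitz_on[OF \<open>0 < m\<close>, of "p - 1" "max (1 + u) 1"]])
    have "max (1 + u) 1 powr (p - 2) \<le> m powr (p - 2)"
      using assms u by (intro powr_mono2') auto
    then show "\<bar>p - 1\<bar> * max (m powr (p - 1 - 1)) (max (1 + u) 1 powr (p - 1 - 1))
        \<le> (1 - p) * m powr (p - 2)"
      using assms by (simp add: max_absorb1)
  qed
  then have "\<bar>(1 + u) powr (p - 1) - 1 powr (p - 1)\<bar> \<le> (1 - p) * m powr (p - 2) * \<bar>u\<bar>"
    using lipschitz_on_normD[of _ _ _ "1 + u" 1] assms u by fastforce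
  also have "\<dots> \<le> (1 - p) * m powr (p - 2) * r"
    using assms u by (intro mult_left_mono) auto
  finally show "\<bar>(1 + u) powr (p - 1) - 1\<bar> \<le> (1 - p) * m powr (p - 2) * r" by simp
qed (use assms in auto)

lemma jump_integrand_abs_le:
  assumes "p < 1" "0 < m" "m \<le> 1" "-1 + m \<le> s"
  shows "\<bar>jump_integrand p s\<bar> \<le> (1 - p) * m powr (p - 2) * s\<^sup>2"
proof -
  have "s \<in> {max (-1 + m) (- \<bar>s\<bar>)..\<bar>s\<bar>}" "0 \<in> {max (-1 + m) (- \<bar>s\<bar>)..\<bar>s\<bar>}"
    using assms by auto
  from lipschitz_on_normD[OF jump_integrand_lipschitz_on[OF assms(1-3)] this] show ?thesis
    by (simp add: jump_integrand_def power2_eq_square abs_mult mult.assoc)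
qed

lemma util_measurable [measurable]: "util p \<in> borel_measurable borel"
  unfolding util_def[abs_def] by (cases "p = 0") simp_all

lemma jump_integrand_measurable [measurable]: "jump_integrand p \<in> borel_measurable borel"
  unfolding jump_integrand_def[abs_def] by measurable

lemma wt_measurable [measurable]: "wt eps \<in> borel_measurable borel"
  unfolding wt_def[abs_def] by measurable

lemma wt_nonneg [simp]: "0 \<le> wt eps z"
  by (simp add: wt_def)

lemma wt_eq_min_powr:
  assumes "eps \<le> 2"
  shows "wt eps z = min (norm z) 1 powr (2 - eps)"
proof (cases "norm z \<le> 1")
  case True
  then show ?thesis
    using powr_mono2[of "2 - eps" "norm z" 1] assms by (simp add: wt_def min_def)
next
  case False
  then show ?thesis
    using ge_one_powr_ge_zero[of "norm z" "2 - eps"] assms by (simp add: wt_def)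
qed

lemma norm_sq_le_wt_small:
  assumes "0 \<le> eps" "eps \<le> 2" "norm z \<le> r" "r \<le> 1"
  shows "(norm z)\<^sup>2 \<le> r powr eps * wt eps z"
proof (cases "z = 0")
  case False
  have "(norm z)\<^sup>2 = norm z powr eps * norm z powr (2 - eps)"
    using False by (simp add: powr_add[symmetric] powr_numeral)
  also have "\<dots> \<le> r powr eps * norm z powr (2 - eps)"
    using assms by (intro mult_right_mono powr_mono2) auto
  also have "norm z powr (2 - eps) = wt eps z"
    using assms wt_eq_min_powr[of eps z] by simp
  finally show ?thesis .
qed simp

lemma norm_sq_le_wt:
  assumes "0 \<le> eps" "eps \<le> 2" "norm z \<le> r" "1 \<le> r"
  shows "(norm z)\<^sup>2 \<le> r\<^sup>2 * wt eps z"
proof (cases "norm z \<le> 1")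
  case True
  then have "(norm z)\<^sup>2 \<le> wt eps z"
    using norm_sq_le_wt_small[of eps z 1] assms by simp
  also have "\<dots> \<le> r\<^sup>2 * wt eps z"
    using mult_right_mono[of 1 "r\<^sup>2" "wt eps z"] assms by (simp add: one_le_power)
  finally show ?thesis .
next
  case False
  then have "wt eps z = 1" using wt_eq_min_powr[of eps z] assms by simp
  then show ?thesis using assms by (simp add: power_mono)
qed

section \<open>Test functions and the metric on Levy measures\<close>

lemma testf_of_lipschitz:
  fixes \<psi> :: "real^'d::finite \<Rightarrow> real"
  assumes lip: "L-lipschitz_on UNIV \<psi>" and bound: "\<And>z. \<bar>\<psi> z\<bar> \<le> B" and "0 < eps"
  shows "(\<lambda>z. \<psi> z / (2 * B + L + 1)) \<in> testf eps"
proof -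
  define K where "K = 2 * B + L + 1"
  have "0 \<le> L" "0 \<le> B" using lipschitz_on_nonneg[OF lip] bound[of 0] by auto
  then have "1 \<le> K" by (simp add: K_def)
  have half: "\<bar>\<psi> z / K\<bar> \<le> 1 / 2" for z
    using bound[of z] \<open>0 \<le> L\<close> by (simp add: K_def abs_divide field_simps)
  have hoelder: "\<bar>\<psi> z / K - \<psi> w / K\<bar> \<le> norm (z - w) powr (min eps 1)" for z w
  proof (cases "1 \<le> norm (z - w)")
    case True
    then have "1 \<le> norm (z - w) powr (min eps 1)"
      using \<open>0 < eps\<close> by (intro ge_one_powr_ge_zero) auto
    then show ?thesis using half[of z] half[of w] by linarith
  next
    case False
    have "\<bar>\<psi> z / K - \<psi> w / K\<bar> \<le> L * norm (z - w) / K"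
      using lipschitz_on_normD[OF lip, of z w] \<open>1 \<le> K\<close>
      by (simp add: diff_divide_distrib[symmetric] abs_divide divide_right_mono)
    also have "\<dots> \<le> norm (z - w)"
      using \<open>1 \<le> K\<close> \<open>0 \<le> B\<close> by (simp add: K_def field_simps mult_right_mono)
    also have "\<dots> \<le> norm (z - w) powr (min eps 1)"
      using False \<open>0 < eps\<close> powr_mono'[of "min eps 1" 1 "norm (z - w)"] by (cases "z = w") auto
    finally show ?thesis .
  qed
  have "continuous_on UNIV (\<lambda>z. \<psi> z / K)"
    using lipschitz_on_continuous_on[OF lip] by (intro continuous_intros) (use \<open>1 \<le> K\<close> in auto)
  moreover have one: "\<bar>\<psi> z / K\<bar> \<le> 1" for z
    using half[of z] by linarith
  then have "bounded (range (\<lambda>z. \<psi> z / K))"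
    by (intro boundedI[of _ 1]) auto
  ultimately show ?thesis
    using one hoelder by (fastforce simp: testf_def K_def[symmetric])
qed

lemma testf_uminus: "f \<in> testf eps \<Longrightarrow> (\<lambda>z. - f z) \<in> testf eps"
  by (auto simp: testf_def continuous_on_minus bounded_uminus image_image[symmetric]
      abs_minus_commute)

lemma testf_one: "(\<lambda>z. 1) \<in> testf eps"
  by (simp add: testf_def)

lemma dL_less_imp_integral_diff_less:
  assumes f: "f \<in> testf eps" and d: "dL eps \<mu> \<nu> < ereal \<delta>"
  shows "\<bar>(\<integral>z. f z * wt eps z \<partial>\<mu>) - (\<integral>z. f z * wt eps z \<partial>\<nu>)\<bar> < \<delta>"
proof (cases "\<mu> = \<nu> \<or> \<not> (integrable \<mu> (wt eps) \<and> integrable \<nu> (wt eps))")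
  case True
  then show ?thesis using d by (auto simp: dL_def split: if_splits)
next
  case False
  then have dL_eq: "dL eps \<mu> \<nu> =
      (SUP f \<in> testf eps. ereal ((\<integral>z. f z * wt eps z \<partial>\<mu>) - (\<integral>z. f z * wt eps z \<partial>\<nu>)))"
    by (simp add: dL_def)
  have "ereal ((\<integral>z. g z * wt eps z \<partial>\<mu>) - (\<integral>z. g z * wt eps z \<partial>\<nu>)) < ereal \<delta>"
    if "g \<in> testf eps" for g
    using le_less_trans[OF SUP_upper[OF that] d[unfolded dL_eq]] .
  from this[OF f] this[OF testf_uminus[OF f]] show ?thesis by simp
qed

lemma dL_null_measure_le:
  assumes "dL eps \<mu> (null_measure borel) \<le> ereal k" "0 \<le> k"
  shows "integrable \<mu> (wt eps)" "(\<integral>z. wt eps z \<partial>\<mu>) \<le> k"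
proof -
  have "integrable \<mu> (wt eps) \<and> (\<integral>z. wt eps z \<partial>\<mu>) \<le> k"
  proof (cases "\<mu> = null_measure borel \<or> \<not> integrable \<mu> (wt eps)")
    case True
    then show ?thesis using assms by (auto simp: dL_def split: if_splits)
  next
    case False
    then have "ereal (\<integral>z. wt eps z \<partial>\<mu>) \<le> dL eps \<mu> (null_measure borel)"
      by (simp add: dL_def) (rule SUP_upper2[OF testf_one], simp)
    with False assms(1) show ?thesis by (metis ereal_less_eq(3) order_trans)
  qed
  then show "integrable \<mu> (wt eps)" "(\<integral>z. wt eps z \<partial>\<mu>) \<le> k" by auto
qed

lemma AE_in_msupp:
  fixes \<mu> :: "(real^'d::finite) measure"
  assumes "sets \<mu> = sets borel"
  shows "AE z in \<mu>. z \<in> msupp \<mu>"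
proof -
  define F where "F = {ball z e | z e. 0 < e \<and> emeasure \<mu> (ball z e) = 0}"
  obtain F' where F': "F' \<subseteq> F" "countable F'" "\<Union>F' = \<Union>F"
    using Lindelof[of F] by (auto simp: F_def)
  have "- msupp \<mu> \<subseteq> \<Union>F"
    by (force simp: F_def msupp_def not_less)
  moreover have "N \<in> null_sets \<mu>" if "N \<in> F'" for N
    using that F'(1) assms by (auto simp: F_def null_sets_def)
  then have "\<Union>F' \<in> null_sets \<mu>"
    by (rule null_sets_UN'[OF F'(2), of "\<lambda>N. N", simplified])
  ultimately show ?thesis
    using F'(3) by (intro AE_I'[of "\<Union>F'"]) auto
qed

section \<open>Uniform estimates on the feasible set\<close>

locale bounded_market =
  fixes p m \<kappa> eps :: real and S :: "(real^'d::finite) set"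
  assumes p: "p < 1" and m: "0 < m" "m \<le> 1" and \<kappa>: "0 < \<kappa>" and eps: "0 < eps" "eps \<le> 2"
    and S_bounded: "S \<subseteq> cball 0 \<kappa>"
begin

definition feasible :: "(real^'d) set" where
  "feasible = {x. norm x \<le> \<kappa> \<and> (\<forall>z\<in>S. -1 + m \<le> x \<bullet> z)}"

definition jump_measures :: "(real^'d) measure set" where
  "jump_measures = {\<mu>. sets \<mu> = sets borel \<and> msupp \<mu> \<subseteq> S \<and> dL eps \<mu> (null_measure borel) \<le> ereal \<kappa>}"

definition admissible :: "'d triple set" where
  "admissible = {(y, M, \<mu>). norm y \<le> \<kappa> \<and> mnorm2 M \<le> \<kappa> \<and> \<mu> \<in> jump_measures}"

definition jump_const :: real where
  "jump_const = (1 - p) * m powr (p - 2)"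

definition clip_bound :: real where
  "clip_bound = max 1 (\<kappa>\<^sup>2)"

definition clipped_jump :: "real^'d \<Rightarrow> real^'d \<Rightarrow> real" where
  "clipped_jump x z = jump_integrand p (max (-1 + m) (min (x \<bullet> z) clip_bound))"

definition cutoff :: "real \<Rightarrow> real^'d \<Rightarrow> real" where
  "cutoff c z = max c (min (norm z) 1) powr (2 - eps)"

text \<open>For \<open>x\<close> feasible, \<open>z \<in> S\<close> and \<open>norm z \<ge> c\<close> neither the clipping nor the cutoff is active,
  so \<open>jump_approx c x z * wt eps z\<close> is exactly the jump integrand there; the two make
  \<open>jump_approx c x\<close> bounded and Lipschitz uniformly in \<open>x\<close>, hence a fixed multiple of it is a
  test function of \<open>dL\<close>.\<close>
definition jump_approx :: "real \<Rightarrow> real^'d \<Rightarrow> real^'d \<Rightarrow> real" where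
  "jump_approx c x z = clipped_jump x z / cutoff c z"

lemma jump_const_nonneg: "0 \<le> jump_const"
  using p by (simp add: jump_const_def)

lemma clip_bound_ge: "1 \<le> clip_bound" "\<kappa>\<^sup>2 \<le> clip_bound"
  by (simp_all add: clip_bound_def)

lemma abs_inner_le_feasible:
  assumes "x \<in> feasible"
  shows "\<bar>x \<bullet> z\<bar> \<le> \<kappa> * norm z"
  using assms Cauchy_Schwarz_ineq2[of x z] mult_right_mono[of "norm x" \<kappa> "norm z"]
  by (auto simp: feasible_def)

lemma inner_ge_subset_feasible:
  assumes "cball 0 (1 / \<kappa>) \<subseteq> convex hull (S \<union> {0})"
  shows "{x. \<forall>z\<in>S. -1 + m \<le> x \<bullet> z} \<subseteq> feasible"
proof safe
  fix x assume x: "\<forall>z\<in>S. -1 + m \<le> x \<bullet> z"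
  have "norm x \<le> (1 - m) * \<kappa>"
    using norm_le_of_inner_ge_on_hull[OF assms \<kappa> m(2) x] .
  also have "\<dots> \<le> \<kappa>"
    using m \<kappa> by (intro mult_left_le_one_le) auto
  finally show "x \<in> feasible"
    using x by (simp add: feasible_def)
qed

lemma jump_integrand_inner_le:
  assumes "x \<in> feasible" "z \<in> S"
  shows "\<bar>jump_integrand p (x \<bullet> z)\<bar> \<le> jump_const * \<kappa>\<^sup>2 * (norm z)\<^sup>2"
proof -
  have "\<bar>jump_integrand p (x \<bullet> z)\<bar> \<le> jump_const * (x \<bullet> z)\<^sup>2"
    using jump_integrand_abs_le[OF p m] assms by (simp add: jump_const_def feasible_def)
  also have "\<dots> \<le> jump_const * (\<kappa> * norm z)\<^sup>2"
    using abs_inner_le_feasible[OF assms(1), of z] jump_const_nonneg \<kappa>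
    by (intro mult_left_mono) (simp_all add: abs_le_square_iff[symmetric] abs_mult)
  finally show ?thesis by (simp add: power_mult_distrib mult_ac)
qed

lemma jump_approx_error:
  assumes x: "x \<in> feasible" and z: "z \<in> S" and c: "0 < c" "c \<le> 1"
  shows "\<bar>jump_integrand p (x \<bullet> z) - jump_approx c x z * wt eps z\<bar>
    \<le> jump_const * \<kappa>\<^sup>2 * c powr eps * wt eps z"
proof -
  have "norm z \<le> \<kappa>" using S_bounded z by auto
  then have "\<bar>x \<bullet> z\<bar> \<le> \<kappa> * \<kappa>"
    using \<kappa> by (intro order_trans[OF abs_inner_le_feasible[OF x] mult_left_mono]) auto
  then have clip: "max (-1 + m) (min (x \<bullet> z) clip_bound) = x \<bullet> z"
    using x z clip_bound_ge by (auto simp: feasible_def power2_eq_square)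
  show ?thesis
  proof (cases "c \<le> norm z")
    case True
    have "cutoff c z = wt eps z" "0 < wt eps z"
      using True c eps by (auto simp: cutoff_def wt_eq_min_powr)
    with clip have "jump_approx c x z * wt eps z = jump_integrand p (x \<bullet> z)"
      by (simp add: jump_approx_def clipped_jump_def)
    then show ?thesis
      using jump_const_nonneg by simp
  next
    case False
    have cut: "cutoff c z = c powr (2 - eps)" "0 < c powr (2 - eps)"
      using False c by (auto simp: cutoff_def max_def min_def)
    have "wt eps z \<le> c powr (2 - eps)"
      using False c eps by (simp add: wt_eq_min_powr powr_mono2)
    then have ratio: "0 \<le> 1 - wt eps z / c powr (2 - eps)" "1 - wt eps z / c powr (2 - eps) \<le> 1"
      using cut(2) by auto
    have "jump_integrand p (x \<bullet> z) - jump_approx c x z * wt eps z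
        = jump_integrand p (x \<bullet> z) * (1 - wt eps z / c powr (2 - eps))"
      using clip cut by (simp add: jump_approx_def clipped_jump_def field_simps)
    then have "\<bar>jump_integrand p (x \<bullet> z) - jump_approx c x z * wt eps z\<bar>
        = \<bar>jump_integrand p (x \<bullet> z)\<bar> * (1 - wt eps z / c powr (2 - eps))"
      using ratio by (simp add: abs_mult)
    also have "\<dots> \<le> jump_const * \<kappa>\<^sup>2 * (norm z)\<^sup>2"
      using jump_integrand_inner_le[OF x z] ratio by (meson abs_ge_zero mult_left_le order_trans)
    also have "\<dots> \<le> jump_const * \<kappa>\<^sup>2 * (c powr eps * wt eps z)"
      using norm_sq_le_wt_small[of eps z c] False c eps jump_const_nonneg
      by (intro mult_left_mono) auto
    finally show ?thesis by (simp add: mult_ac)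
  qed
qed

lemma clipped_jump_lipschitz:
  assumes "x \<in> feasible"
  shows "(jump_const * clip_bound * \<kappa>)-lipschitz_on UNIV (clipped_jump x)"
proof -
  have "\<kappa>-lipschitz_on UNIV (\<lambda>z. x \<bullet> z)"
    using assms by (intro lipschitz_on_le[OF lipschitz_on_inner_left]) (simp add: feasible_def)
  then have "(1 * \<kappa>)-lipschitz_on UNIV (\<lambda>z. max (-1 + m) (min (x \<bullet> z) clip_bound))"
    by (rule lipschitz_on_compose2[OF _ lipschitz_on_max_min])
  moreover have "(jump_const * clip_bound)-lipschitz_on
      {max (-1 + m) (- clip_bound)..clip_bound} (jump_integrand p)"
    using jump_integrand_lipschitz_on[OF p m, of clip_bound] clip_bound_ge
    by (simp add: jump_const_def)
  then have "(jump_const * clip_bound)-lipschitz_on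
      (range (\<lambda>z. max (-1 + m) (min (x \<bullet> z) clip_bound))) (jump_integrand p)"
    by (rule lipschitz_on_subset) (use m clip_bound_ge in auto)
  ultimately have "(jump_const * clip_bound * (1 * \<kappa>))-lipschitz_on UNIV (clipped_jump x)"
    unfolding clipped_jump_def by (rule lipschitz_on_compose2)
  then show ?thesis by simp
qed

lemma abs_clipped_jump_le: "\<bar>clipped_jump x z\<bar> \<le> jump_const * clip_bound\<^sup>2"
proof -
  have "\<bar>clipped_jump x z\<bar> \<le> jump_const * (max (-1 + m) (min (x \<bullet> z) clip_bound))\<^sup>2"
    unfolding clipped_jump_def jump_const_def by (rule jump_integrand_abs_le[OF p m]) simp
  also have "\<dots> \<le> jump_const * clip_bound\<^sup>2"
    using m clip_bound_ge jump_const_nonneg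
    by (intro mult_left_mono) (auto simp: abs_le_square_iff[symmetric])
  finally show ?thesis .
qed

lemma cutoff_lipschitz:
  assumes "0 < c" "c \<le> 1"
  shows "((2 - eps) * max (c powr (1 - eps)) 1)-lipschitz_on UNIV (cutoff c)"
proof -
  have "1-lipschitz_on UNIV (\<lambda>z. max c (min (norm z) 1))"
    by (rule lipschitz_onI)
      (auto simp: dist_real_def dist_norm intro: order_trans[OF _ norm_triangle_ineq3])
  moreover have "(\<bar>2 - eps\<bar> * max (c powr (2 - eps - 1)) (1 powr (2 - eps - 1)))-lipschitz_on
      (range (\<lambda>z. max c (min (norm z) 1))) (\<lambda>u. u powr (2 - eps))"
    by (rule lipschitz_on_subset[OF powr_lipschitz_on[OF assms(1)]]) (use assms in auto)
  ultimately have "(\<bar>2 - eps\<bar> * max (c powr (2 - eps - 1)) (1 powr (2 - eps - 1)) * 1)-lipschitz_on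
      UNIV (cutoff c)"
    unfolding cutoff_def by (rule lipschitz_on_compose2)
  then show ?thesis
    using eps by (simp add: diff_diff_eq)
qed

lemma cutoff_ge: "0 < c \<Longrightarrow> c powr (2 - eps) \<le> cutoff c z"
  unfolding cutoff_def using eps by (intro powr_mono2) auto

lemma jump_approx_testf:
  assumes c: "0 < c" "c \<le> 1"
  obtains K where "0 < K" "\<And>x. x \<in> feasible \<Longrightarrow> (\<lambda>z. jump_approx c x z / K) \<in> testf eps"
proof -
  define d where "d = c powr (2 - eps)"
  define B where "B = jump_const * clip_bound\<^sup>2 / d"
  define L where "L = jump_const * clip_bound * \<kappa> / d
    + jump_const * clip_bound\<^sup>2 * ((2 - eps) * max (c powr (1 - eps)) 1) / d\<^sup>2"
  have "0 < d" using c by (simp add: d_def)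
  have "L-lipschitz_on UNIV (jump_approx c x)" if "x \<in> feasible" for x
    unfolding L_def jump_approx_def[abs_def] d_def
    using clipped_jump_lipschitz[OF that] abs_clipped_jump_le cutoff_lipschitz[OF c]
      cutoff_ge[OF c(1)] c(1)
    by (intro lipschitz_on_divide) auto
  moreover have "\<bar>jump_approx c x z\<bar> \<le> B" for x z
    using abs_clipped_jump_le[of x z] cutoff_ge[OF c(1), of z] \<open>0 < d\<close> jump_const_nonneg
    by (simp add: B_def d_def jump_approx_def abs_divide frac_le)
  ultimately have "(\<lambda>z. jump_approx c x z / (2 * B + L + 1)) \<in> testf eps" if "x \<in> feasible" for x
    using that eps by (intro testf_of_lipschitz) auto
  moreover have "0 < 2 * B + L + 1"
    unfolding B_def L_def using jump_const_nonneg clip_bound_ge \<kappa> eps \<open>0 < d\<close>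
    by (intro add_nonneg_pos add_nonneg_nonneg divide_nonneg_nonneg mult_nonneg_nonneg)
      (auto simp: le_max_iff_disj)
  ultimately show ?thesis
    using that by blast
qed

lemma jump_approx_measurable [measurable]: "jump_approx c x \<in> borel_measurable borel"
  unfolding jump_approx_def[abs_def] clipped_jump_def[abs_def] cutoff_def[abs_def] by measurable

lemma jump_measuresD:
  assumes "\<mu> \<in> jump_measures"
  shows "sets \<mu> = sets borel" "AE z in \<mu>. z \<in> S" "integrable \<mu> (wt eps)" "(\<integral>z. wt eps z \<partial>\<mu>) \<le> \<kappa>"
proof -
  show sets: "sets \<mu> = sets borel" using assms by (simp add: jump_measures_def)
  show "AE z in \<mu>. z \<in> S"
    using AE_in_msupp[OF sets] assms by (auto simp: jump_measures_def elim: AE_mp)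
  show "integrable \<mu> (wt eps)" "(\<integral>z. wt eps z \<partial>\<mu>) \<le> \<kappa>"
    using dL_null_measure_le[of eps \<mu> \<kappa>] assms \<kappa> by (auto simp: jump_measures_def)
qed

lemma integrable_and_integral_le_if_le_wt:
  assumes \<mu>: "\<mu> \<in> jump_measures" and [measurable]: "f \<in> borel_measurable borel"
    and "0 \<le> C" and le: "\<And>z. z \<in> S \<Longrightarrow> \<bar>f z\<bar> \<le> C * wt eps z"
  shows "integrable \<mu> f" "\<bar>\<integral>z. f z \<partial>\<mu>\<bar> \<le> C * \<kappa>"
proof -
  note \<mu>_facts = jump_measuresD[OF \<mu>]
  have f_meas: "f \<in> borel_measurable \<mu>"
    by (subst measurable_cong_sets[OF \<mu>_facts(1) refl]) (rule assms(2))
  have AE_le: "AE z in \<mu>. \<bar>f z\<bar> \<le> C * wt eps z"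
    using \<mu>_facts(2) by eventually_elim (rule le)
  have C_wt: "integrable \<mu> (\<lambda>z. C * wt eps z)"
    using \<mu>_facts(3) by simp
  show f_int: "integrable \<mu> f"
  proof (rule Bochner_Integration.integrable_bound[OF C_wt f_meas])
    show "AE z in \<mu>. norm (f z) \<le> norm (C * wt eps z)"
      using AE_le by eventually_elim (use \<open>0 \<le> C\<close> in \<open>simp add: abs_mult\<close>)
  qed
  have "\<bar>\<integral>z. f z \<partial>\<mu>\<bar> \<le> (\<integral>z. \<bar>f z\<bar> \<partial>\<mu>)"
    using integral_norm_bound[of \<mu> f] by simp
  also have "\<dots> \<le> (\<integral>z. C * wt eps z \<partial>\<mu>)"
    using f_int C_wt AE_le by (intro integral_mono_AE) auto
  also have "\<dots> \<le> C * \<kappa>"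
    using \<mu>_facts(4) \<open>0 \<le> C\<close> by (simp add: mult_left_mono)
  finally show "\<bar>\<integral>z. f z \<partial>\<mu>\<bar> \<le> C * \<kappa>" .
qed

lemma integrable_jump_integrand:
  assumes x: "x \<in> feasible" and \<mu>: "\<mu> \<in> jump_measures"
  shows "integrable \<mu> (\<lambda>z. jump_integrand p (x \<bullet> z))"
    "\<bar>\<integral>z. jump_integrand p (x \<bullet> z) \<partial>\<mu>\<bar> \<le> jump_const * \<kappa>\<^sup>2 * (max 1 \<kappa>)\<^sup>2 * \<kappa>"
proof -
  have "\<bar>jump_integrand p (x \<bullet> z)\<bar> \<le> jump_const * \<kappa>\<^sup>2 * (max 1 \<kappa>)\<^sup>2 * wt eps z" if "z \<in> S" for z
  proof -
    have "(norm z)\<^sup>2 \<le> (max 1 \<kappa>)\<^sup>2 * wt eps z"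
      using that S_bounded eps by (intro norm_sq_le_wt) auto
    then have "jump_const * \<kappa>\<^sup>2 * (norm z)\<^sup>2 \<le> jump_const * \<kappa>\<^sup>2 * ((max 1 \<kappa>)\<^sup>2 * wt eps z)"
      using jump_const_nonneg by (intro mult_left_mono) auto
    then show ?thesis
      using jump_integrand_inner_le[OF x that] by (simp add: mult.assoc)
  qed
  from integrable_and_integral_le_if_le_wt[OF \<mu> _ _ this] jump_const_nonneg
  show "integrable \<mu> (\<lambda>z. jump_integrand p (x \<bullet> z))"
    "\<bar>\<integral>z. jump_integrand p (x \<bullet> z) \<partial>\<mu>\<bar> \<le> jump_const * \<kappa>\<^sup>2 * (max 1 \<kappa>)\<^sup>2 * \<kappa>"
    by simp_all
qed

lemma integral_jump_approx_error:
  assumes x: "x \<in> feasible" and \<mu>: "\<mu> \<in> jump_measures" and c: "0 < c" "c \<le> 1"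
  shows "integrable \<mu> (\<lambda>z. jump_approx c x z * wt eps z)"
    "\<bar>(\<integral>z. jump_integrand p (x \<bullet> z) \<partial>\<mu>) - (\<integral>z. jump_approx c x z * wt eps z \<partial>\<mu>)\<bar>
       \<le> jump_const * \<kappa>\<^sup>2 * c powr eps * \<kappa>"
proof -
  define E where "E z = jump_integrand p (x \<bullet> z) - jump_approx c x z * wt eps z" for z
  have E_le: "\<bar>E z\<bar> \<le> jump_const * \<kappa>\<^sup>2 * c powr eps * wt eps z" if "z \<in> S" for z
    unfolding E_def by (rule jump_approx_error[OF x that c])
  have "E \<in> borel_measurable borel"
    unfolding E_def[abs_def] by measurable
  from integrable_and_integral_le_if_le_wt[OF \<mu> this _ E_le] jump_const_nonneg
  have E_int: "integrable \<mu> E" and E_bound: "\<bar>\<integral>z. E z \<partial>\<mu>\<bar> \<le> jump_const * \<kappa>\<^sup>2 * c powr eps * \<kappa>"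
    by simp_all
  have J_int: "integrable \<mu> (\<lambda>z. jump_integrand p (x \<bullet> z))"
    by (rule integrable_jump_integrand[OF x \<mu>])
  have "(\<lambda>z. jump_approx c x z * wt eps z) = (\<lambda>z. jump_integrand p (x \<bullet> z) - E z)"
    by (simp add: E_def)
  then show approx_int: "integrable \<mu> (\<lambda>z. jump_approx c x z * wt eps z)"
    using J_int E_int by simp
  have "(\<integral>z. E z \<partial>\<mu>) = (\<integral>z. jump_integrand p (x \<bullet> z) \<partial>\<mu>) - (\<integral>z. jump_approx c x z * wt eps z \<partial>\<mu>)"
    unfolding E_def by (rule Bochner_Integration.integral_diff[OF J_int approx_int])
  with E_bound show "\<bar>(\<integral>z. jump_integrand p (x \<bullet> z) \<partial>\<mu>) - (\<integral>z. jump_approx c x z * wt eps z \<partial>\<mu>)\<bar>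
       \<le> jump_const * \<kappa>\<^sup>2 * c powr eps * \<kappa>" by simp
qed

lemma integral_jump_integrand_modulus:
  assumes c: "0 < c" "c \<le> 1"
  obtains K where "0 < K"
    "\<And>x \<mu> \<nu> \<delta>. x \<in> feasible \<Longrightarrow> \<mu> \<in> jump_measures \<Longrightarrow> \<nu> \<in> jump_measures \<Longrightarrow> dL eps \<mu> \<nu> < ereal \<delta> \<Longrightarrow>
       \<bar>(\<integral>z. jump_integrand p (x \<bullet> z) \<partial>\<nu>) - (\<integral>z. jump_integrand p (x \<bullet> z) \<partial>\<mu>)\<bar>
         \<le> K * \<delta> + 2 * (jump_const * \<kappa>\<^sup>2 * c powr eps * \<kappa>)"
proof -
  obtain K where K: "0 < K" "\<And>x. x \<in> feasible \<Longrightarrow> (\<lambda>z. jump_approx c x z / K) \<in> testf eps"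
    using jump_approx_testf[OF c] by blast
  have "\<bar>(\<integral>z. jump_integrand p (x \<bullet> z) \<partial>\<nu>) - (\<integral>z. jump_integrand p (x \<bullet> z) \<partial>\<mu>)\<bar>
      \<le> K * \<delta> + 2 * (jump_const * \<kappa>\<^sup>2 * c powr eps * \<kappa>)"
    if x: "x \<in> feasible" and \<mu>: "\<mu> \<in> jump_measures" and \<nu>: "\<nu> \<in> jump_measures"
      and d: "dL eps \<mu> \<nu> < ereal \<delta>" for x \<mu> \<nu> \<delta>
  proof -
    have "\<bar>(\<integral>z. jump_approx c x z / K * wt eps z \<partial>\<mu>)
        - (\<integral>z. jump_approx c x z / K * wt eps z \<partial>\<nu>)\<bar> < \<delta>"
      by (rule dL_less_imp_integral_diff_less[OF K(2)[OF x] d])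
    then have "\<bar>(\<integral>z. jump_approx c x z * wt eps z \<partial>\<nu>)
        - (\<integral>z. jump_approx c x z * wt eps z \<partial>\<mu>)\<bar> < K * \<delta>"
      using K(1)
      by (simp add: diff_divide_distrib[symmetric] abs_minus_commute pos_divide_less_eq mult_ac)
    with integral_jump_approx_error(2)[OF x \<mu> c] integral_jump_approx_error(2)[OF x \<nu> c]
    show ?thesis
      by linarith
  qed
  with K(1) show ?thesis by (rule that)
qed

lemma abs_quadratic_diff_le_feasible:
  assumes "x \<in> feasible"
  shows "\<bar>x \<bullet> (M' *v x) - x \<bullet> (M *v x)\<bar> \<le> \<kappa>\<^sup>2 * mnorm2 (M - M')"
proof -
  have "\<bar>x \<bullet> (M' *v x) - x \<bullet> (M *v x)\<bar> = \<bar>x \<bullet> ((M - M') *v x)\<bar>"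
    by (simp add: matrix_vector_mult_diff_rdistrib inner_diff_right)
  also have "\<dots> \<le> mnorm2 (M - M') * (norm x)\<^sup>2"
    by (rule abs_inner_matrix_le)
  also have "\<dots> \<le> mnorm2 (M - M') * \<kappa>\<^sup>2"
    using assms mnorm2_nonneg[of "M - M'"]
    by (intro mult_left_mono power_mono) (auto simp: feasible_def)
  finally show ?thesis by (simp add: mult.commute)
qed

lemma gfun_modulus:
  assumes c: "0 < c" "c \<le> 1"
  obtains L where "0 < L"
    "\<And>x a b \<delta>. x \<in> feasible \<Longrightarrow> a \<in> admissible \<Longrightarrow> b \<in> admissible \<Longrightarrow> dC eps a b < ereal \<delta> \<Longrightarrow>
       \<bar>gfun p b x - gfun p a x\<bar> \<le> L * \<delta> + 2 * (jump_const * \<kappa>\<^sup>2 * c powr eps * \<kappa>)"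
proof -
  obtain K where K: "0 < K"
    "\<And>x \<mu> \<nu> \<delta>. x \<in> feasible \<Longrightarrow> \<mu> \<in> jump_measures \<Longrightarrow> \<nu> \<in> jump_measures \<Longrightarrow> dL eps \<mu> \<nu> < ereal \<delta> \<Longrightarrow>
       \<bar>(\<integral>z. jump_integrand p (x \<bullet> z) \<partial>\<nu>) - (\<integral>z. jump_integrand p (x \<bullet> z) \<partial>\<mu>)\<bar>
         \<le> K * \<delta> + 2 * (jump_const * \<kappa>\<^sup>2 * c powr eps * \<kappa>)"
    using integral_jump_integrand_modulus[OF c] by blast
  define L where "L = \<kappa> + (1 - p) / 2 * \<kappa>\<^sup>2 + K"
  have "\<bar>gfun p b x - gfun p a x\<bar> \<le> L * \<delta> + 2 * (jump_const * \<kappa>\<^sup>2 * c powr eps * \<kappa>)"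
    if x: "x \<in> feasible" and a: "a \<in> admissible" and b: "b \<in> admissible"
      and d: "dC eps a b < ereal \<delta>" for x a b \<delta>
  proof -
    obtain y M \<mu> y' M' \<nu> where ab: "a = (y, M, \<mu>)" "b = (y', M', \<nu>)"
      by (cases a, cases b) auto
    have measures: "\<mu> \<in> jump_measures" "\<nu> \<in> jump_measures"
      using a b by (auto simp: ab admissible_def)
    have close: "norm (y - y') < \<delta>" "mnorm2 (M - M') < \<delta>" "dL eps \<mu> \<nu> < ereal \<delta>"
      using d by (auto simp: ab dC_def)
    have "\<bar>x \<bullet> y' - x \<bullet> y\<bar> \<le> \<kappa> * norm (y' - y)"
      using abs_inner_le_feasible[OF x, of "y' - y"] by (simp add: inner_diff_right)
    also have "\<dots> \<le> \<kappa> * \<delta>"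
      using close(1) \<kappa> by (intro mult_left_mono) (auto simp: norm_minus_commute)
    finally have "\<bar>x \<bullet> y' - x \<bullet> y\<bar> \<le> \<kappa> * \<delta>" .
    moreover have "\<bar>(1 - p) / 2 * (x \<bullet> (M' *v x)) - (1 - p) / 2 * (x \<bullet> (M *v x))\<bar>
        \<le> (1 - p) / 2 * \<kappa>\<^sup>2 * \<delta>"
    proof -
      have "\<bar>x \<bullet> (M' *v x) - x \<bullet> (M *v x)\<bar> \<le> \<kappa>\<^sup>2 * \<delta>"
        using close(2)
        by (intro order_trans[OF abs_quadratic_diff_le_feasible[OF x] mult_left_mono]) auto
      moreover have "(1 - p) / 2 * (x \<bullet> (M' *v x)) - (1 - p) / 2 * (x \<bullet> (M *v x))
          = (1 - p) / 2 * (x \<bullet> (M' *v x) - x \<bullet> (M *v x))"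
        by (simp add: right_diff_distrib)
      ultimately show ?thesis
        using p by (simp only: abs_mult) (simp add: mult.assoc mult_left_mono)
    qed
    moreover note K(2)[OF x measures close(3)]
    ultimately have "\<bar>gfun p b x - gfun p a x\<bar>
        \<le> \<kappa> * \<delta> + (1 - p) / 2 * \<kappa>\<^sup>2 * \<delta> + (K * \<delta> + 2 * (jump_const * \<kappa>\<^sup>2 * c powr eps * \<kappa>))"
      unfolding ab gfun_eq by linarith
    then show ?thesis by (simp add: L_def algebra_simps)
  qed
  moreover have "0 < L" using K(1) \<kappa> p by (simp add: L_def add_nonneg_pos)
  ultimately show ?thesis using that by blast
qed

lemma bdd_above_gfun:
  assumes "a \<in> admissible"
  shows "bdd_above (gfun p a ` feasible)"
proof -
  obtain y M \<mu> where a: "a = (y, M, \<mu>)" "norm y \<le> \<kappa>" "mnorm2 M \<le> \<kappa>" "\<mu> \<in> jump_measures"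
    using assms by (auto simp: admissible_def)
  have "\<bar>gfun p a x\<bar> \<le> \<kappa> * \<kappa> + (1 - p) / 2 * (\<kappa>\<^sup>2 * \<kappa>) + jump_const * \<kappa>\<^sup>2 * (max 1 \<kappa>)\<^sup>2 * \<kappa>"
    if x: "x \<in> feasible" for x
  proof -
    have "\<bar>x \<bullet> y\<bar> \<le> \<kappa> * \<kappa>"
      using \<kappa> a(2) by (intro order_trans[OF abs_inner_le_feasible[OF x] mult_left_mono]) auto
    moreover have "\<bar>(1 - p) / 2 * (x \<bullet> (M *v x))\<bar> \<le> (1 - p) / 2 * (\<kappa>\<^sup>2 * \<kappa>)"
    proof -
      have "\<bar>x \<bullet> (M *v x)\<bar> \<le> \<kappa>\<^sup>2 * \<kappa>"
        using abs_quadratic_diff_le_feasible[OF x, of 0 M] a(3)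
          mult_left_mono[of "mnorm2 M" \<kappa> "\<kappa>\<^sup>2"]
        by simp
      then show ?thesis using p by (simp add: abs_mult mult_left_mono)
    qed
    moreover note integrable_jump_integrand(2)[OF x a(4)]
    ultimately show ?thesis
      unfolding a(1) gfun_eq by linarith
  qed
  then show ?thesis
    by (intro bdd_aboveI2) (use abs_le_D1 in blast)
qed

theorem Sup_gfun_continuous:
  assumes X: "X \<subseteq> feasible" "X \<noteq> {}" and "A \<subseteq> admissible"
  shows "\<forall>a\<in>A. \<forall>e>0. \<exists>\<delta>>0. \<forall>b\<in>A.
    dC eps a b < ereal \<delta> \<longrightarrow> \<bar>Sup (gfun p b ` X) - Sup (gfun p a ` X)\<bar> < e"
proof (intro ballI allI impI)
  fix a and e :: real assume "a \<in> A" and "0 < e"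
  then have a: "a \<in> admissible" using \<open>A \<subseteq> admissible\<close> by blast
  obtain c where c: "0 < c" "c \<le> 1" "2 * (jump_const * \<kappa>\<^sup>2 * \<kappa>) * c powr eps < e / 2"
    using exists_powr_small[of eps "e / 2" "2 * (jump_const * \<kappa>\<^sup>2 * \<kappa>)"]
      eps \<open>0 < e\<close> \<kappa> jump_const_nonneg
    by auto
  obtain L where L: "0 < L"
    "\<And>x b \<delta>. x \<in> feasible \<Longrightarrow> b \<in> admissible \<Longrightarrow> dC eps a b < ereal \<delta> \<Longrightarrow>
       \<bar>gfun p b x - gfun p a x\<bar> \<le> L * \<delta> + 2 * (jump_const * \<kappa>\<^sup>2 * c powr eps * \<kappa>)"
    using gfun_modulus[OF c(1,2)] a by metis
  have bdd: "bdd_above (gfun p b ` X)" if "b \<in> admissible" for b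
    using bdd_above_mono[OF bdd_above_gfun[OF that] image_mono[OF X(1)]] .
  have "\<bar>Sup (gfun p b ` X) - Sup (gfun p a ` X)\<bar> < e"
    if b: "b \<in> A" and d: "dC eps a b < ereal (e / (2 * L))" for b
  proof -
    have "\<bar>Sup (gfun p b ` X) - Sup (gfun p a ` X)\<bar>
        \<le> L * (e / (2 * L)) + 2 * (jump_const * \<kappa>\<^sup>2 * c powr eps * \<kappa>)"
      using X b d \<open>A \<subseteq> admissible\<close> by (intro abs_cSUP_diff_le bdd a L(2)) auto
    also have "\<dots> < e"
      using c(3) L(1) by (simp add: mult_ac)
    finally show ?thesis .
  qed
  moreover have "0 < e / (2 * L)" using L(1) \<open>0 < e\<close> by simp
  ultimately show "\<exists>\<delta>>0. \<forall>b\<in>A. dC eps a b < ereal \<delta> \<longrightarrow> \<bar>Sup (gfun p b ` X) - Sup (gfun p a ` X)\<bar> < e"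
    by blast
qed

end

theorem lemmaC2:
  fixes T eps p :: real and n :: nat and t :: real
    and C :: "('d::finite) triple set" and \<Theta> :: "real \<Rightarrow> 'd triple set"
    and \<kappa> :: "real \<Rightarrow> real"
  assumes T_pos: "T > 0"
    and eps: "0 < eps" "eps \<le> 2"
    and C_sub: "\<forall>(y, M, \<mu>) \<in> C. spd M \<and> levy \<mu>"
    and C_compact: "dC_compact eps C"
    and Theta_ne: "\<forall>s\<in>{0..T}. \<Theta> s \<noteq> {}"
    and Theta_closed: "\<forall>s\<in>{0..T}. dC_closed_in eps C (\<Theta> s)"
    and Theta_convex: "\<forall>s\<in>{0..T}. triple_convex (\<Theta> s)"
    and Theta_meas: "weakly_measurable eps T C \<Theta>"
    and S_closed: "\<forall>s\<in>{0..T}. closed (bigS \<Theta> s)"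
    and kappa_pos: "\<forall>s\<in>{0..T}. \<kappa> s > 0"
    and kappa_conv: "\<forall>s\<in>{0..T}. cball 0 (1 / \<kappa> s) \<subseteq> convex hull (bigS \<Theta> s \<union> {0})
                         \<and> convex hull (bigS \<Theta> s \<union> {0}) \<subseteq> cball 0 (\<kappa> s)"
    and kappa_bd: "\<forall>s\<in>{0..T}. \<forall>(y, M, \<mu>) \<in> \<Theta> s.
                      norm y \<le> \<kappa> s \<and> mnorm2 M \<le> \<kappa> s \<and> dL eps \<mu> (null_measure borel) \<le> ereal (\<kappa> s)"
    and p: "p < 1"
    and t: "t \<in> {0..T}"
    and n: "n \<ge> 1"
  shows "\<forall>a \<in> \<Theta> t. \<forall>e > 0. \<exists>\<delta> > 0. \<forall>b \<in> \<Theta> t.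
           dC eps a b < ereal \<delta> \<longrightarrow>
           \<bar>Sup (gfun p b ` Oset \<Theta> t n) - Sup (gfun p a ` Oset \<Theta> t n)\<bar> < e"
proof -
  have "0 < \<kappa> t" using kappa_pos t by blast
  have hull: "cball 0 (1 / \<kappa> t) \<subseteq> convex hull (bigS \<Theta> t \<union> {0})" "bigS \<Theta> t \<subseteq> cball 0 (\<kappa> t)"
    using kappa_conv t hull_subset[of "bigS \<Theta> t \<union> {0}" convex] by blast+
  interpret bounded_market p "1 / real n" "\<kappa> t" eps "bigS \<Theta> t"
    using p n eps \<open>0 < \<kappa> t\<close> hull(2) by unfold_locales auto
  have "Oset \<Theta> t n \<subseteq> feasible"
    using inner_ge_subset_feasible[OF hull(1)] by (simp add: Oset_def)
  moreover have "0 \<in> Oset \<Theta> t n"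
    using n by (simp add: Oset_def)
  moreover have "\<Theta> t \<subseteq> admissible"
  proof safe
    fix y M \<mu> assume y: "(y, M, \<mu>) \<in> \<Theta> t"
    have "\<Theta> t \<subseteq> C" using Theta_closed t by (simp add: dC_closed_in_def)
    with C_sub y have "levy \<mu>" by blast
    moreover have "msupp \<mu> \<subseteq> bigS \<Theta> t" using y by (force simp: bigS_def)
    ultimately show "(y, M, \<mu>) \<in> admissible"
      using y kappa_bd t by (auto simp: admissible_def jump_measures_def levy_def)
  qed
  ultimately show ?thesis by (intro Sup_gfun_continuous) auto
qed

end
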